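(* Let $\alpha_N,\alpha_B$ be distinct nonzero real numbers with $\alpha_B=-\alpha_N$, and let $0<t_0\le1$ be fixed. Put $T=3+t_0^2$ and, for $\theta\in[-\pi,\pi]^2$, $F=1+e^{i\theta_1}+e^{i\theta_2}$. Consider $$M(\eta,\theta)=\begin{pmatrix}-T\eta-\alpha_N&\bar F&0&t_0^2\\ F&-T\eta-\alpha_B&t_0^2&0\\ 0&t_0^2&-T\eta&\bar F\\ t_0^2&0&F&-T\eta\end{pmatrix}.$$ Then the dispersion relation obtained from the hBN–graphene bilayer stacking (the root branches $\eta$ of $\det M(\eta,\theta)=0$) always has a gap at $F=0$, i.e. no two branches touch at $F=0$.
   Context: This models a two-layer heterostructure as a periodic Schrödinger quantum graph (edges of length 1, even continuous potential $q_0$): a lower hexagonal layer with two alternating atom types (parameters $\delta_N$ at type-$A$ and $\delta_B$ at type-$B$ vertices, modelling hexagonal boron nitride) and an upper hexagonal layer with one atom type (parameter $\delta_C$, modelling graphene), joined by vertical edges with weak coupling $t_0$ and modified Neumann vertex conditions $u_{a_1}(v)=u_{a_2}(v)=u_f(v)/t_0$, $\sum_a u_a'(v)\pm\sum_f t_0u_f'(v)=\delta_vu(v)$. For $\lambda$ outside the Dirichlet spectrum, with $\varphi_0,\varphi_1$ solutions of $-\varphi''+q_0\varphi=\lambda\varphi$ with $\varphi_0(0)=1,\varphi_0(1)=0,\varphi_1(0)=0,\varphi_1(1)=1$, set $\eta=\varphi_1'(1)/\varphi_1'(0)$, $\alpha_k=\delta_k/\varphi_1'(0)$ (treated as constants),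 and the carbon parameter is taken $\alpha_C=0$. $\lambda$ lies in the spectrum iff $\det M(\eta(\lambda),\theta)=0$ for some $\theta$; the dispersion relation is identified with the root branches $\eta$ as functions of $F$. *)

theory Defs
  imports Complex_Main "Jordan_Normal_Form.Determinant"
begin

definition Fq :: "real \<Rightarrow> real \<Rightarrow> complex" where
  "Fq th1 th2 = 1 + cis th1 + cis th2"

definition Mbil :: "real \<Rightarrow> real \<Rightarrow> real \<Rightarrow> real \<Rightarrow> real \<Rightarrow> real \<Rightarrow> complex mat" where
  "Mbil aN aB t0 eta th1 th2 =
     (let T = 3 + t0\<^sup>2; F = Fq th1 th2; s = complex_of_real (t0\<^sup>2);
          d = complex_of_real (- T * eta) in
      mat_of_rows_list 4
       [[d - complex_of_real aN, cnj F, 0, s],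
        [F, d - complex_of_real aB, s, 0],
        [0, s, d, cnj F],
        [s, 0, F, d]])"

end

theory Submission
  imports Defs
begin

text \<open>At \<open>F = 0\<close> the matrix decouples into the two \<open>2 \<times> 2\<close> blocks on the index pairs
  \<open>{1, 4}\<close> and \<open>{2, 3}\<close>, so with \<open>d = -T\<eta>\<close> and \<open>s = t\<^sub>0\<^sup>2\<close> the determinant is
  \<open>(d(d - \<alpha>\<^sub>N) - s\<^sup>2)(d(d + \<alpha>\<^sub>N) - s\<^sup>2)\<close>. Each factor has two real roots
  \<open>(\<pm>\<alpha>\<^sub>N \<pm> r)/2\<close> with \<open>r = \<surd>(\<alpha>\<^sub>N\<^sup>2 + 4s\<^sup>2) > |\<alpha>\<^sub>N|\<close>, and these four roots are pairwise
  distinct because \<open>\<alpha>\<^sub>N \<noteq> 0\<close> and \<open>r \<noteq> \<pm>\<alpha>\<^sub>N\<close>.\<close>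

lemma mat_delete_entry:
  "k < dim_row A - 1 \<Longrightarrow> l < dim_col A - 1 \<Longrightarrow>
   mat_delete A i j $$ (k, l) = A $$ (if k < i then k else Suc k, if l < j then l else Suc l)"
  by (simp add: mat_delete_def)

lemma det_2x2:
  fixes A :: "'a :: comm_ring_1 mat"
  assumes "A \<in> carrier_mat 2 2"
  shows "det A = A $$ (0,0) * A $$ (1,1) - A $$ (0,1) * A $$ (1,0)"
proof -
  have "det A = (\<Sum>j<2. A $$ (0,j) * cofactor A 0 j)"
    by (rule laplace_expansion_row[OF assms]) simp
  then show ?thesis
    using assms by (simp add: numeral_2_eq_2 cofactor_def det_single mat_delete_def)
qed

lemma det_3x3:
  fixes A :: "'a :: comm_ring_1 mat"
  assumes "A \<in> carrier_mat 3 3"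
  shows "det A = A $$ (0,0) * (A $$ (1,1) * A $$ (2,2) - A $$ (1,2) * A $$ (2,1))
    - A $$ (0,1) * (A $$ (1,0) * A $$ (2,2) - A $$ (1,2) * A $$ (2,0))
    + A $$ (0,2) * (A $$ (1,0) * A $$ (2,1) - A $$ (1,1) * A $$ (2,0))"
proof -
  have "det A = (\<Sum>j<3. A $$ (0,j) * cofactor A 0 j)"
    by (rule laplace_expansion_row[OF assms]) simp
  also have "\<dots> = A $$ (0,0) * det (mat_delete A 0 0) - A $$ (0,1) * det (mat_delete A 0 1)
      + A $$ (0,2) * det (mat_delete A 0 2)"
    by (simp add: lessThan_nat_numeral cofactor_def)
  moreover have "mat_delete A 0 j \<in> carrier_mat 2 2" for j
    using mat_delete_carrier[OF assms] by simp
  ultimately show ?thesis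
    using assms by (simp add: det_2x2 mat_delete_entry numeral_2_eq_2)
qed

lemma det_4x4_first_row:
  fixes A :: "'a :: comm_ring_1 mat"
  assumes "A \<in> carrier_mat 4 4"
  shows "det A = A $$ (0,0) * det (mat_delete A 0 0) - A $$ (0,1) * det (mat_delete A 0 1)
    + A $$ (0,2) * det (mat_delete A 0 2) - A $$ (0,3) * det (mat_delete A 0 3)"
proof -
  have "det A = (\<Sum>j<4. A $$ (0,j) * cofactor A 0 j)"
    by (rule laplace_expansion_row[OF assms]) simp
  then show ?thesis
    by (simp add: lessThan_nat_numeral cofactor_def)
qed

lemma det_two_interlaced_blocks:
  fixes a b s x :: "'a :: comm_ring_1"
  shows "det (mat_of_rows_list 4 [[a,0,0,s], [0,b,s,0], [0,s,x,0], [s,0,0,x]])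
    = (x * a - s\<^sup>2) * (x * b - s\<^sup>2)" (is "det ?A = _")
proof -
  have A: "?A \<in> carrier_mat 4 4"
    by (rule carrier_matI) (simp_all add: mat_of_rows_list_def)
  have minors: "mat_delete ?A 0 j \<in> carrier_mat 3 3" for j
    using mat_delete_carrier[OF A] by simp
  have "det ?A = a * det (mat_delete ?A 0 0) - s * det (mat_delete ?A 0 3)"
    unfolding det_4x4_first_row[OF A] by (simp add: mat_of_rows_list_def)
  also have "\<dots> = a * (b * (x * x) - s * (s * x)) - s * (b * (x * s) - s * (s * s))"
    unfolding det_3x3[OF minors] by (simp add: mat_delete_entry mat_of_rows_list_def)
  also have "\<dots> = (x * a - s\<^sup>2) * (x * b - s\<^sup>2)"
    by (simp add: algebra_simps power2_eq_square)
  finally show ?thesis .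
qed

lemma det_Mbil_F_zero:
  assumes "Fq th1 th2 = 0" and "d = - (3 + t0\<^sup>2) * eta"
  shows "det (Mbil aN aB t0 eta th1 th2)
    = complex_of_real ((d * (d - aN) - t0 ^ 4) * (d * (d - aB) - t0 ^ 4))"
proof -
  have "det (Mbil aN aB t0 eta th1 th2)
      = (of_real d * (of_real d - of_real aN) - (of_real (t0\<^sup>2))\<^sup>2)
      * (of_real d * (of_real d - of_real aB) - (of_real (t0\<^sup>2))\<^sup>2)"
    using det_two_interlaced_blocks[of "of_real d - of_real aN" "of_real (t0\<^sup>2)"
      "of_real d - of_real aB" "of_real d"]
    unfolding Mbil_def Let_def assms(1) complex_cnj_zero assms(2)[symmetric]
    by (simp add: algebra_simps)
  then show ?thesis
    by (simp flip: power_mult)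
qed

lemma quadratic_roots:
  fixes a c d r :: real
  assumes "r\<^sup>2 = a\<^sup>2 + 4 * c"
  shows "d * (d - a) = c \<longleftrightarrow> d = (a + r) / 2 \<or> d = (a - r) / 2"
proof -
  have "d * (d - a) - c = (d - (a + r) / 2) * (d - (a - r) / 2)"
    using assms by (simp add: field_simps power2_eq_square)
  then show ?thesis
    by (simp only: eq_iff_diff_eq_0[of "d * (d - a)"] mult_eq_0_iff) simp
qed

lemma card_roots_opposite_quadratics:
  fixes a c :: real
  assumes "a \<noteq> 0" and "c > 0"
  shows "card {d. (d * (d - a) - c) * (d * (d + a) - c) = 0} = 4"
proof -
  define r where "r = sqrt (a\<^sup>2 + 4 * c)"
  have r2: "r\<^sup>2 = a\<^sup>2 + 4 * c"
    unfolding r_def using assms by simp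
  have "\<bar>a\<bar> < r"
    unfolding r_def using assms by (simp add: real_less_rsqrt)
  then have "distinct [(a + r) / 2, (a - r) / 2, (- a + r) / 2, (- a - r) / 2]"
    using assms by auto
  moreover have "{d. (d * (d - a) - c) * (d * (d + a) - c) = 0}
      = set [(a + r) / 2, (a - r) / 2, (- a + r) / 2, (- a - r) / 2]"
    using quadratic_roots[OF r2] quadratic_roots[of r "- a" c] r2 by auto
  ultimately show ?thesis
    by (simp only: distinct_card) simp
qed

theorem mainTheorem5:
  fixes aN aB t0 th1 th2 :: real
  assumes "aN \<noteq> 0" and "aB \<noteq> 0" and "aN \<noteq> aB" and "aB = - aN"
    and "0 < t0" and "t0 \<le> 1"
    and "th1 \<in> {-pi..pi}" and "th2 \<in> {-pi..pi}"
    and "Fq th1 th2 = 0"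
  shows "card {eta :: real. det (Mbil aN aB t0 eta th1 th2) = 0} = 4"
proof -
  define T where "T = 3 + t0\<^sup>2"
  define D where "D = {d. (d * (d - aN) - t0 ^ 4) * (d * (d + aN) - t0 ^ 4) = 0}"
  have "T > 0"
    unfolding T_def by (simp add: add_pos_nonneg)
  then have inj: "inj (\<lambda>eta. - T * eta)" and onto: "surj (\<lambda>eta. - T * eta)"
    by (auto intro!: injI surjI[of _ "\<lambda>d. - d / T"])
  have "det (Mbil aN aB t0 eta th1 th2) = 0 \<longleftrightarrow> - T * eta \<in> D" for eta
    unfolding det_Mbil_F_zero[OF assms(9) refl] of_real_eq_0_iff D_def T_def assms(4) by simp
  then have "{eta. det (Mbil aN aB t0 eta th1 th2) = 0} = (\<lambda>eta. - T * eta) -` D"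
    by auto
  moreover have "card D = 4"
    unfolding D_def using card_roots_opposite_quadratics assms(1,5) by simp
  ultimately show ?thesis
    using inj onto by (simp add: card_vimage_inj)
qed

end
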